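(* Let $\tau$ be a trace on $\widehat{TL}_3(q)$, let $X=g_{\sigma_2}g_{\sigma_1}g_{a_3}$, $u=g_{\sigma_2}g_{a_3}g_{\sigma_2}^{-1}$, and let $r\le s$ be positive integers. Then there exist an integer $0\le h\le s$, elements $c_0,\dots,c_h\in B$ and finitely many Markov elements $M_i$ such that $$\tau\Big(g_{a_3}\,u\,(g_{\sigma_1}u)^{s}\,g_{a_3}\,(g_{\sigma_1}u)^{r}\Big)=\tau\Big(\sum_{j=0}^{h}c_jX^{j}+\sum_iM_i\Big).$$
   Context: $K$ is an integral domain of characteristic $0$, $q\in K$ invertible and a square, $q+1$ invertible. $\widehat{TL}_3(q)$ is the unital $K$-algebra generated by $g_{\sigma_1},g_{\sigma_2},g_{a_3}$ with relations $g_{\sigma_1}g_{\sigma_2}g_{\sigma_1}=g_{\sigma_2}g_{\sigma_1}g_{\sigma_2}$, $g_{\sigma_i}g_{a_3}g_{\sigma_i}=g_{a_3}g_{\sigma_i}g_{a_3}$ ($i=1,2$), $x^2=(q-1)x+q$ for each generator $x$, and $V(g_{\sigma_1},g_{\sigma_2})=V(g_{\sigma_1},g_{a_3})=V(g_{\sigma_2},g_{a_3})=0$ where $V(x,y)=xyx+xy+yx+x+y+1$. $B$ is the unital subalgebra generated by $g_{\sigma_1}$ and $u$. A Markov element is an element $A\,g_{\sigma_2}^{\epsilon}A'$ with $A,A'\in B$, $\epsilon\in\{0,1\}$. A trace is a $K$-linear map $\tau:\widehat{TL}_3(q)\to K$ with $\tau(xy)=\tau(yx)$. *)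

theory Defs
  imports Main
begin

text \<open>A unital K-algebra is modelled as a ring A (type class ring_1) together with a
  central unital ring homomorphism ofK : K -> A (scalar multiplication c x = ofK c * x).\<close>

definition central_hom :: "('k::comm_ring_1 \<Rightarrow> 'a::ring_1) \<Rightarrow> bool" where
  "central_hom ofK \<longleftrightarrow>
     ofK 1 = 1 \<and> (\<forall>c d. ofK (c + d) = ofK c + ofK d) \<and> (\<forall>c d. ofK (c * d) = ofK c * ofK d)
     \<and> (\<forall>c x. ofK c * x = x * ofK c)"

definition is_trace :: "('k::comm_ring_1 \<Rightarrow> 'a::ring_1) \<Rightarrow> ('a \<Rightarrow> 'k) \<Rightarrow> bool" where
  "is_trace ofK \<tau> \<longleftrightarrow>
     (\<forall>x y. \<tau> (x + y) = \<tau> x + \<tau> y) \<and> (\<forall>c x. \<tau> (ofK c * x) = c * \<tau> x)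
     \<and> (\<forall>x y. \<tau> (x * y) = \<tau> (y * x))"

definition Vrel :: "'a::ring_1 \<Rightarrow> 'a \<Rightarrow> 'a" where
  "Vrel x y = x*y*x + x*y + y*x + x + y + 1"

definition quad_rel :: "('k::comm_ring_1 \<Rightarrow> 'a::ring_1) \<Rightarrow> 'k \<Rightarrow> 'a \<Rightarrow> bool" where
  "quad_rel ofK q x \<longleftrightarrow> x^2 = ofK (q - 1) * x + ofK q"

text \<open>Defining relations of the algebra hat-TL_3(q) on generators g1 = g_sigma1,
  g2 = g_sigma2, g3 = g_a3.\<close>
definition TL3_rels :: "('k::comm_ring_1 \<Rightarrow> 'a::ring_1) \<Rightarrow> 'k \<Rightarrow> 'a \<Rightarrow> 'a \<Rightarrow> 'a \<Rightarrow> bool" where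
  "TL3_rels ofK q g1 g2 g3 \<longleftrightarrow>
     g1*g2*g1 = g2*g1*g2 \<and> g1*g3*g1 = g3*g1*g3 \<and> g2*g3*g2 = g3*g2*g3
     \<and> quad_rel ofK q g1 \<and> quad_rel ofK q g2 \<and> quad_rel ofK q g3
     \<and> Vrel g1 g2 = 0 \<and> Vrel g1 g3 = 0 \<and> Vrel g2 g3 = 0"

inductive_set subalg :: "('k::comm_ring_1 \<Rightarrow> 'a::ring_1) \<Rightarrow> 'a set \<Rightarrow> 'a set"
  for ofK S where
  scal: "ofK c \<in> subalg ofK S"
| gen: "x \<in> S \<Longrightarrow> x \<in> subalg ofK S"
| add: "x \<in> subalg ofK S \<Longrightarrow> y \<in> subalg ofK S \<Longrightarrow> x + y \<in> subalg ofK S"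
| mult: "x \<in> subalg ofK S \<Longrightarrow> y \<in> subalg ofK S \<Longrightarrow> x * y \<in> subalg ofK S"

definition markov :: "'a set \<Rightarrow> 'a::ring_1 \<Rightarrow> 'a \<Rightarrow> bool" where
  "markov B g2 M \<longleftrightarrow> (\<exists>a a' \<epsilon>::nat. a \<in> B \<and> a' \<in> B \<and> \<epsilon> \<le> 1 \<and> M = a * g2 ^ \<epsilon> * a')"

end

theory Submission
  imports Defs
begin

text \<open>
  Write \<open>X = g2 g1 g3\<close>, \<open>u = g2 g3 g2\<^sup>-\<^sup>1\<close> and \<open>T = g1 u\<close>. Conjugation by \<open>X\<close> swaps \<open>g1\<close>
  and \<open>u\<close>, so \<open>X\<close> normalises \<open>B\<close>, and the quadratic relation for \<open>g2\<close> gives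
  \<open>X g2 \<in> B X + B g2 B\<close>. Hence left multiplication by \<open>X\<close> raises by one the degree of an
  element of the form \<open>\<Sum>\<^sub>j\<^sub>\<le>\<^sub>n c\<^sub>j X\<^sup>j + (Markov elements)\<close>. Since \<open>g3 = g1\<^sup>-\<^sup>1 g2\<^sup>-\<^sup>1 X\<close> and
  \<open>X T = (u g1) X\<close>, the quadratic relation for \<open>g3\<close> expands the word into Markov elements
  and the term \<open>g1\<^sup>-\<^sup>1 (g2 T\<^sup>s g1 g2) g1 T\<^sup>r\<close>; and \<open>g2 T\<^sup>k g1 g2\<close> has degree \<open>k\<close> by induction
  on \<open>k\<close>, because \<open>g2 T = g1 X g2\<^sup>-\<^sup>1\<close> and \<open>g2\<^sup>-\<^sup>1\<close> is a linear combination of \<open>1\<close> and \<open>g2\<close>.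
  The identity obtained holds in the algebra itself.
\<close>

locale central_algebra =
  fixes ofK :: "'k::comm_ring_1 \<Rightarrow> 'a::ring_1"
  assumes central: "central_hom ofK"
begin

lemma ofK_1: "ofK 1 = 1"
  and ofK_add: "ofK (c + d) = ofK c + ofK d"
  and ofK_mult: "ofK (c * d) = ofK c * ofK d"
  and ofK_commute: "ofK c * x = x * ofK c"
  using central unfolding central_hom_def by blast+

lemma ofK_0: "ofK 0 = 0"
  using ofK_add[of 0 0] by simp

lemma ofK_uminus: "ofK (- c) = - ofK c"
  using ofK_add[of "- c" c] by (simp add: ofK_0 add_eq_0_iff2)

lemma mult_ofK_left_commute: "x * (ofK c * y) = ofK c * (x * y)"
  by (metis mult.assoc ofK_commute)

lemma subalg_0: "0 \<in> subalg ofK S"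
  using subalg.scal[of ofK 0] by (simp add: ofK_0)

lemma subalg_1: "1 \<in> subalg ofK S"
  using subalg.scal[of ofK 1] by (simp add: ofK_1)

lemma subalg_diff: "x \<in> subalg ofK S \<Longrightarrow> y \<in> subalg ofK S \<Longrightarrow> x - y \<in> subalg ofK S"
  using subalg.add[OF _ subalg.mult[OF subalg.scal[of ofK "- 1"]], of x S y]
  by (simp add: ofK_uminus ofK_1)

lemma subalg_power: "x \<in> subalg ofK S \<Longrightarrow> x ^ n \<in> subalg ofK S"
  by (induction n) (simp_all add: subalg_1 subalg.mult)

lemma subalg_normalizer:
  assumes gens: "\<And>x. x \<in> S \<Longrightarrow> \<exists>y\<in>subalg ofK S. z * x = y * z"
    and "b \<in> subalg ofK S"
  shows "\<exists>b'\<in>subalg ofK S. z * b = b' * z"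
  using \<open>b \<in> subalg ofK S\<close>
proof (induction rule: subalg.induct)
  case (scal c)
  then show ?case using subalg.scal ofK_commute by metis
next
  case (gen x)
  then show ?case using gens by blast
next
  case (add x y)
  then show ?case using subalg.add by (metis distrib_left distrib_right)
next
  case (mult x y)
  then obtain a b where "a \<in> subalg ofK S" "z * x = a * z" "b \<in> subalg ofK S" "z * y = b * z"
    by blast
  then have "z * (x * y) = (a * b) * z" by (metis mult.assoc)
  then show ?case using \<open>a \<in> subalg ofK S\<close> \<open>b \<in> subalg ofK S\<close> subalg.mult by blast
qed

end

lemma power_mult_slide: "(x::'a::monoid_mult) * (y * x) ^ n = (x * y) ^ n * x"
proof (induction n)
  case (Suc n)
  have "x * (y * x) ^ Suc n = x * y * (x * (y * x) ^ n)" by (simp add: mult.assoc)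
  with Suc show ?case by (simp add: mult.assoc)
qed simp

locale markov_reduction =
  fixes B :: "'a::ring_1 set" and g X :: 'a
  assumes zero_mem: "0 \<in> B"
    and add_mem: "x \<in> B \<Longrightarrow> y \<in> B \<Longrightarrow> x + y \<in> B"
    and mult_mem: "x \<in> B \<Longrightarrow> y \<in> B \<Longrightarrow> x * y \<in> B"
    and normalizes: "b \<in> B \<Longrightarrow> \<exists>b'\<in>B. X * b = b' * X"
begin

definition reducible :: "nat \<Rightarrow> 'a \<Rightarrow> bool" where
  "reducible n z \<longleftrightarrow> (\<exists>c Ms. (\<forall>j\<le>n. c j \<in> B) \<and> (\<forall>M\<in>set Ms. markov B g M) \<and>
      z = (\<Sum>j = 0..n. c j * X ^ j) + sum_list Ms)"

lemma power_normalizes: "b \<in> B \<Longrightarrow> \<exists>b'\<in>B. X ^ j * b = b' * X ^ j"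
proof (induction j arbitrary: b)
  case 0
  then show ?case by auto
next
  case (Suc j)
  then obtain a where a: "a \<in> B" "X ^ j * b = a * X ^ j" by blast
  then obtain a' where a': "a' \<in> B" "X * a = a' * X" using normalizes by blast
  have "X ^ Suc j * b = X * a * X ^ j" by (simp add: a mult.assoc)
  also have "\<dots> = a' * X ^ Suc j" by (simp add: a' mult.assoc)
  finally show ?case using a' by blast
qed

lemma markov_mult:
  assumes "b \<in> B" "markov B g M"
  shows markov_mult_left: "markov B g (b * M)" and markov_mult_right: "markov B g (M * b)"
proof -
  obtain a a' and e :: nat where "a \<in> B" "a' \<in> B" "e \<le> 1" "M = a * g ^ e * a'"
    using assms(2) unfolding markov_def by blast
  with \<open>b \<in> B\<close> show "markov B g (b * M)" unfolding markov_def
    by (intro exI[of _ "b * a"] exI[of _ a'] exI[of _ e]) (simp add: mult_mem mult.assoc)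
  from \<open>a \<in> B\<close> \<open>a' \<in> B\<close> \<open>e \<le> 1\<close> \<open>M = a * g ^ e * a'\<close> \<open>b \<in> B\<close>
  show "markov B g (M * b)" unfolding markov_def
    by (intro exI[of _ a] exI[of _ "a' * b"] exI[of _ e]) (simp add: mult_mem mult.assoc)
qed

lemma markov_g: "a \<in> B \<Longrightarrow> a' \<in> B \<Longrightarrow> markov B g (a * g * a')"
  unfolding markov_def by (intro exI[of _ a] exI[of _ a'] exI[of _ 1]) simp

lemma reducible_markov: "markov B g M \<Longrightarrow> reducible n M"
  unfolding reducible_def
  by (rule exI[of _ "\<lambda>_. 0"], rule exI[of _ "[M]"]) (simp add: zero_mem)

lemma reducible_0: "reducible n 0"
  unfolding reducible_def
  by (rule exI[of _ "\<lambda>_. 0"], rule exI[of _ "[]"]) (simp add: zero_mem)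

lemma reducible_add: "reducible n x \<Longrightarrow> reducible n y \<Longrightarrow> reducible n (x + y)"
proof -
  assume "reducible n x" "reducible n y"
  then obtain c Ms d Ns where "\<forall>j\<le>n. c j \<in> B" "\<forall>M\<in>set Ms. markov B g M"
     "x = (\<Sum>j = 0..n. c j * X ^ j) + sum_list Ms"
     "\<forall>j\<le>n. d j \<in> B" "\<forall>M\<in>set Ns. markov B g M"
     "y = (\<Sum>j = 0..n. d j * X ^ j) + sum_list Ns"
    unfolding reducible_def by blast
  then show ?thesis unfolding reducible_def
    by (intro exI[of _ "\<lambda>j. c j + d j"] exI[of _ "Ms @ Ns"])
      (auto simp: add_mem distrib_right sum.distrib)
qed

lemma reducible_sum: "finite S \<Longrightarrow> (\<And>i. i \<in> S \<Longrightarrow> reducible n (f i)) \<Longrightarrow> reducible n (sum f S)"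
  by (induction S rule: finite_induct) (simp_all add: reducible_0 reducible_add)

lemma reducible_sum_list:
  "(\<And>M. M \<in> set Ms \<Longrightarrow> reducible n (f M)) \<Longrightarrow> reducible n (sum_list (map f Ms))"
  by (induction Ms) (simp_all add: reducible_0 reducible_add)

lemma reducible_monomial: "b \<in> B \<Longrightarrow> j \<le> n \<Longrightarrow> reducible n (b * X ^ j)"
  unfolding reducible_def
proof (intro exI[of _ "\<lambda>i. if i = j then b else 0"] exI[of _ "[]"] conjI)
  assume "b \<in> B" "j \<le> n"
  then show "\<forall>i\<le>n. (if i = j then b else 0) \<in> B" using zero_mem by auto
  have "(\<Sum>i = 0..n. (if i = j then b else 0) * X ^ i) = (\<Sum>i = 0..n. if i = j then b * X ^ i else 0)"
    by (rule sum.cong) auto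
  also have "\<dots> = b * X ^ j" using \<open>j \<le> n\<close> by simp
  finally show "b * X ^ j = (\<Sum>i = 0..n. (if i = j then b else 0) * X ^ i) + sum_list []"
    by simp
qed simp

lemma reducible_mono: "m \<le> n \<Longrightarrow> reducible m z \<Longrightarrow> reducible n z"
proof -
  assume "m \<le> n" "reducible m z"
  then obtain c Ms where c: "\<forall>j\<le>m. c j \<in> B" and Ms: "\<forall>M\<in>set Ms. markov B g M"
    and z: "z = (\<Sum>j = 0..m. c j * X ^ j) + sum_list Ms"
    unfolding reducible_def by blast
  have "reducible n (c j * X ^ j)" if "j \<in> {0..m}" for j
    using that c \<open>m \<le> n\<close> by (intro reducible_monomial) auto
  then have "reducible n (\<Sum>j = 0..m. c j * X ^ j)" by (intro reducible_sum) simp_all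
  moreover have "reducible n (sum_list Ms)"
    using reducible_sum_list[of Ms n id] Ms reducible_markov by simp
  ultimately show ?thesis unfolding z by (rule reducible_add)
qed

lemma reducible_mult_left: "b \<in> B \<Longrightarrow> reducible n z \<Longrightarrow> reducible n (b * z)"
proof -
  assume b: "b \<in> B" and "reducible n z"
  then obtain c Ms where "\<forall>j\<le>n. c j \<in> B" "\<forall>M\<in>set Ms. markov B g M"
     "z = (\<Sum>j = 0..n. c j * X ^ j) + sum_list Ms"
    unfolding reducible_def by blast
  with b show ?thesis unfolding reducible_def
    by (intro exI[of _ "\<lambda>j. b * c j"] exI[of _ "map ((*) b) Ms"])
      (auto simp: mult_mem markov_mult_left distrib_left sum_distrib_left mult.assoc
         sum_list_const_mult[where f = id, simplified])
qed

lemma reducible_mult_right: "b \<in> B \<Longrightarrow> reducible n z \<Longrightarrow> reducible n (z * b)"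
proof -
  assume b: "b \<in> B" and "reducible n z"
  then obtain c Ms where "\<forall>j\<le>n. c j \<in> B" "\<forall>M\<in>set Ms. markov B g M"
     and z: "z = (\<Sum>j = 0..n. c j * X ^ j) + sum_list Ms"
    unfolding reducible_def by blast
  moreover obtain f where f: "\<And>j. f j \<in> B" "\<And>j. X ^ j * b = f j * X ^ j"
    using power_normalizes[OF b] by metis
  moreover have "(\<Sum>j = 0..n. c j * X ^ j) * b = (\<Sum>j = 0..n. c j * f j * X ^ j)"
    by (simp add: sum_distrib_right mult.assoc f(2))
  ultimately show ?thesis using b unfolding reducible_def
    by (intro exI[of _ "\<lambda>j. c j * f j"] exI[of _ "map (\<lambda>M. M * b) Ms"])
      (auto simp: mult_mem markov_mult_right distrib_right
         sum_list_mult_const[where f = id, simplified])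
qed

lemma reducible_mult_X:
  assumes Xg: "reducible 1 (X * g)" and "reducible n z"
  shows "reducible (Suc n) (X * z)"
proof -
  obtain c Ms where c: "\<forall>j\<le>n. c j \<in> B" and Ms: "\<forall>M\<in>set Ms. markov B g M"
    and z: "z = (\<Sum>j = 0..n. c j * X ^ j) + sum_list Ms"
    using \<open>reducible n z\<close> unfolding reducible_def by blast
  have "reducible (Suc n) (X * (c j * X ^ j))" if j: "j \<in> {0..n}" for j
  proof -
    obtain c' where "c' \<in> B" "X * c j = c' * X" using normalizes[of "c j"] c j by auto
    then show ?thesis using j
      by (metis reducible_monomial Suc_le_mono atLeastAtMost_iff mult.assoc power_Suc)
  qed
  moreover have "reducible (Suc n) (X * M)" if M_in: "M \<in> set Ms" for M
  proof -
    obtain a a' and e :: nat where a: "a \<in> B" "a' \<in> B" and "e \<le> 1" and M: "M = a * g ^ e * a'"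
      using Ms M_in unfolding markov_def by blast
    obtain a'' where "a'' \<in> B" and Xa: "X * a = a'' * X" using normalizes a by blast
    have "reducible 1 (X * g ^ e * a')"
    proof (cases "e = 0")
      case True
      with normalizes[OF \<open>a' \<in> B\<close>] show ?thesis
        using reducible_monomial[where j = 1 and n = 1] by auto
    next
      case False
      with \<open>e \<le> 1\<close> have "e = 1" by simp
      with Xg a show ?thesis by (simp add: reducible_mult_right)
    qed
    then have "reducible (Suc n) (X * g ^ e * a')" by (rule reducible_mono[rotated]) simp
    then have "reducible (Suc n) (a'' * (X * g ^ e * a'))"
      by (rule reducible_mult_left[OF \<open>a'' \<in> B\<close>])
    moreover have "X * M = a'' * (X * g ^ e * a')"
      by (simp add: M mult.assoc[symmetric] Xa)
    ultimately show ?thesis by simp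
  qed
  ultimately show ?thesis unfolding z distrib_left sum_distrib_left
    sum_list_const_mult[where f = id, simplified, symmetric]
    by (intro reducible_add reducible_sum reducible_sum_list) simp_all
qed

end

locale TL3 = central_algebra ofK
  for ofK :: "'k::comm_ring_1 \<Rightarrow> 'a::ring_1" +
  fixes q q' :: 'k and g1 g2 g3 g2i :: 'a
  assumes rels: "TL3_rels ofK q g1 g2 g3"
    and g2_g2i: "g2 * g2i = 1" and g2i_g2: "g2i * g2 = 1"
    and q_q': "q * q' = 1"
begin

definition u :: 'a where "u = g2 * g3 * g2i"
definition X :: 'a where "X = g2 * g1 * g3"
definition T :: 'a where "T = g1 * u"
text \<open>The inverse of \<open>g1\<close>, read off from its quadratic relation.\<close>
definition g1i :: 'a where "g1i = ofK q' * g1 - ofK (q' * (q - 1))"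

abbreviation B :: "'a set" where "B \<equiv> subalg ofK {g1, u}"

lemma braid12: "g1 * g2 * g1 = g2 * g1 * g2"
  and braid13: "g1 * g3 * g1 = g3 * g1 * g3"
  and braid23: "g2 * g3 * g2 = g3 * g2 * g3"
  and g1_square: "g1 * g1 = ofK (q - 1) * g1 + ofK q"
  and g2_square: "g2 * g2 = ofK (q - 1) * g2 + ofK q"
  and g3_square: "g3 * g3 = ofK (q - 1) * g3 + ofK q"
  using rels by (simp_all add: TL3_rels_def quad_rel_def power2_eq_square)

lemma braid12_assoc: "g1 * (g2 * (g1 * x)) = g2 * (g1 * (g2 * x))"
  using braid12 by (metis mult.assoc)

lemma braid23_assoc: "g2 * (g3 * (g2 * x)) = g3 * (g2 * (g3 * x))"
  using braid23 by (metis mult.assoc)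

lemma g2i_g2_assoc: "g2i * (g2 * x) = x"
  by (simp add: mult.assoc[symmetric] g2i_g2)

lemma g2_eq: "g2 = ofK (q - 1) + ofK q * g2i"
proof -
  have "g2 = g2i * (g2 * g2)" by (simp add: g2i_g2_assoc)
  also have "\<dots> = ofK (q - 1) * (g2i * g2) + g2i * ofK q"
    by (simp only: g2_square distrib_left mult_ofK_left_commute)
  finally show ?thesis by (simp add: g2i_g2 ofK_commute)
qed

lemma ofK_q_g2i: "ofK q * g2i = g2 - ofK (q - 1)"
  using g2_eq by (simp add: algebra_simps)

lemma g2i_eq: "g2i = ofK q' * g2 - ofK (q' * (q - 1))"
proof -
  have "g2i = ofK q' * (ofK q * g2i)"
    by (simp add: mult.assoc[symmetric] ofK_mult[symmetric] q_q' mult.commute[of q'] ofK_1)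
  also have "\<dots> = ofK q' * g2 - ofK (q' * (q - 1))"
    by (simp only: ofK_q_g2i right_diff_distrib[of "ofK q'"] ofK_mult)
  finally show ?thesis .
qed

lemma g1i_g1: "g1i * g1 = 1"
proof -
  have "g1i * g1 = ofK q' * (g1 * g1) - ofK (q' * (q - 1)) * g1"
    by (simp add: g1i_def left_diff_distrib mult.assoc)
  also have "\<dots> = ofK (q' * q)"
    by (simp add: g1_square distrib_left mult.assoc[symmetric] ofK_mult)
  finally show ?thesis by (simp add: q_q' mult.commute[of q'] ofK_1)
qed

lemma g1i_g1_assoc: "g1i * (g1 * x) = x"
  by (simp add: mult.assoc[symmetric] g1i_g1)

lemma g1_mem: "g1 \<in> B" and u_mem: "u \<in> B"
  by (simp_all add: subalg.gen)

lemma T_mem: "T \<in> B"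
  by (simp add: T_def subalg.mult g1_mem u_mem)

lemma g1i_mem: "g1i \<in> B"
  by (simp add: g1i_def subalg_diff subalg.mult subalg.scal g1_mem)

lemma g3_u: "g3 * u = g2 * g3"
  by (simp add: u_def mult.assoc braid23_assoc[symmetric] g2_g2i)

lemma g2_g3: "g2 * g3 = u * g2"
  by (simp add: u_def mult.assoc g2i_g2)

lemma X_g1: "X * g1 = u * X"
proof -
  have "X * g1 = g2 * (g3 * (g1 * g3))"
    using braid13 by (simp add: X_def mult.assoc)
  also have "\<dots> = u * X" by (simp add: u_def X_def mult.assoc g2i_g2_assoc)
  finally show ?thesis .
qed

lemma X_u: "X * u = g1 * X"
  by (simp add: X_def u_def mult.assoc braid23_assoc[symmetric] g2_g2i braid12_assoc[symmetric])

lemma X_g3: "X * g3 = ofK (q - 1) * X + ofK q * (g2 * g1)"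
  by (simp add: X_def mult.assoc g3_square distrib_left mult_ofK_left_commute ofK_commute)

lemma g3_eq: "g3 = g1i * g2i * X"
  by (simp add: X_def mult.assoc g2i_g2_assoc g1i_g1_assoc)

lemma X_g2i: "X * g2i = g1i * g2 * g1 * u"
proof -
  have "X * g2i = g1i * (g1 * g2 * g1 * g3 * g2i)"
    by (simp add: X_def mult.assoc g1i_g1_assoc)
  also have "\<dots> = g1i * g2 * g1 * u"
    by (simp add: u_def mult.assoc braid12_assoc)
  finally show ?thesis .
qed

lemma g2_T: "g2 * T = g1 * X * g2i"
  by (simp add: T_def X_def u_def mult.assoc braid12_assoc)

lemma X_T_power: "X * T ^ n = (u * g1) ^ n * X"
proof (induction n)
  case (Suc n)
  have "X * T = u * g1 * X" by (simp add: T_def mult.assoc[symmetric] X_g1) (simp add: mult.assoc X_u)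
  then have "X * T ^ Suc n = u * g1 * (X * T ^ n)" by (simp add: mult.assoc[symmetric])
  with Suc show ?case by (simp add: mult.assoc)
qed simp

sublocale markov_reduction B g2 X
proof (unfold_locales)
  have "\<exists>y\<in>B. X * x = y * X" if "x \<in> {g1, u}" for x
    using that X_g1 X_u g1_mem u_mem by blast
  then show "\<exists>b'\<in>B. X * b = b' * X" if "b \<in> B" for b
    using subalg_normalizer that by blast
qed (simp add: subalg_0, rule subalg.add, assumption+, rule subalg.mult, assumption+)

lemma reducible_X_g2: "reducible 1 (X * g2)"
proof -
  have "X * g2 = X * ofK (q - 1) + X * (ofK q * g2i)"
    by (subst g2_eq) (rule distrib_left)
  also have "\<dots> = ofK (q - 1) * X ^ 1 + (ofK q * g1i) * g2 * (g1 * u)"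
    by (simp only: ofK_commute[symmetric] mult_ofK_left_commute X_g2i mult.assoc power_one_right)
  finally have "X * g2 = ofK (q - 1) * X ^ 1 + (ofK q * g1i) * g2 * (g1 * u)" .
  moreover have "reducible 1 (ofK (q - 1) * X ^ 1)"
    by (rule reducible_monomial) (simp_all add: subalg.scal)
  moreover have "reducible 1 ((ofK q * g1i) * g2 * (g1 * u))"
    by (intro reducible_markov markov_g subalg.mult subalg.scal g1i_mem g1_mem u_mem)
  ultimately show ?thesis by (simp add: reducible_add)
qed

lemma reducible_g2_T_power_g1_g2: "reducible k (g2 * T ^ k * g1 * g2)"
proof (induction k)
  case 0
  have "reducible 0 (g1 * g2 * g1)" by (intro reducible_markov markov_g g1_mem)
  then show ?case by (simp add: braid12)
next
  case (Suc k)
  define Y where "Y = T ^ k * g1 * g2"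
  have "g2i * Y = ofK q' * (g2 * T ^ k * g1 * g2) + (ofK (- (q' * (q - 1))) * (T ^ k * g1)) * g2 * 1"
    by (simp add: Y_def g2i_eq left_diff_distrib ofK_uminus mult.assoc)
  moreover have "reducible k ((ofK (- (q' * (q - 1))) * (T ^ k * g1)) * g2 * 1)"
    by (intro reducible_markov markov_g subalg.mult subalg.scal subalg_power T_mem g1_mem subalg_1)
  ultimately have "reducible k (g2i * Y)"
    using reducible_add reducible_mult_left[OF subalg.scal Suc.IH] by metis
  then have "reducible (Suc k) (g1 * (X * (g2i * Y)))"
    by (intro reducible_mult_left[OF g1_mem] reducible_mult_X reducible_X_g2)
  moreover have "g2 * T ^ Suc k * g1 * g2 = g1 * (X * (g2i * Y))"
    by (simp add: Y_def mult.assoc[symmetric] g2_T)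
  ultimately show ?case by simp
qed

lemma g3_u_T_power: "g3 * u * T ^ s = g1i * g2i * (T ^ s * g1 * X)"
proof -
  have "g3 * u * T ^ s = g1i * g2i * ((X * u) * T ^ s)"
    by (subst g3_eq) (simp only: mult.assoc)
  also have "(X * u) * T ^ s = g1 * (u * g1) ^ s * X"
    by (simp only: X_u mult.assoc X_T_power)
  also have "\<dots> = T ^ s * g1 * X"
    by (simp only: power_mult_slide T_def)
  finally show ?thesis .
qed

lemma word_expansion:
  "g3 * u * T ^ s * g3 * T ^ r =
     (ofK (q - 1) * u) * g2 * (T ^ s * T ^ r)
     + g1i * (g2 * T ^ s * g1 * g2) * (g1 * T ^ r)
     + (ofK (- (q - 1)) * g1i * T ^ s * g1) * g2 * (g1 * T ^ r)"
proof -
  have "g3 * u * T ^ s * g3 = g1i * g2i * (T ^ s * g1) * (X * g3)"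
    unfolding g3_u_T_power by (simp only: mult.assoc)
  also have "\<dots> = ofK (q - 1) * (g1i * g2i * (T ^ s * g1 * X))
      + g1i * (ofK q * g2i) * (T ^ s * g1 * g2 * g1)"
    by (simp only: X_g3 distrib_left mult.assoc mult_ofK_left_commute)
  also have "g1i * g2i * (T ^ s * g1 * X) = u * g2 * T ^ s"
    by (simp add: g3_u_T_power[symmetric] g3_u g2_g3)
  finally have "g3 * u * T ^ s * g3 =
      ofK (q - 1) * (u * g2 * T ^ s) + g1i * (g2 - ofK (q - 1)) * (T ^ s * g1 * g2 * g1)"
    by (simp only: ofK_q_g2i)
  then show ?thesis
    by (simp add: distrib_left distrib_right left_diff_distrib right_diff_distrib mult.assoc
        ofK_uminus[of "q - 1", simplified] mult_ofK_left_commute ofK_commute[of _ g1i, symmetric])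
qed

lemma reducible_word: "reducible s (g3 * u * T ^ s * g3 * T ^ r)"
  unfolding word_expansion
proof (intro reducible_add)
  show "reducible s ((ofK (q - 1) * u) * g2 * (T ^ s * T ^ r))"
    by (intro reducible_markov markov_g subalg.mult subalg.scal u_mem subalg_power T_mem)
  show "reducible s (g1i * (g2 * T ^ s * g1 * g2) * (g1 * T ^ r))"
    by (intro reducible_mult_right reducible_mult_left g1i_mem reducible_g2_T_power_g1_g2
        subalg.mult g1_mem subalg_power T_mem)
  show "reducible s ((ofK (- (q - 1)) * g1i * T ^ s * g1) * g2 * (g1 * T ^ r))"
    by (intro reducible_markov markov_g subalg.mult subalg.scal g1i_mem subalg_power T_mem g1_mem)
qed

end

theorem lemma4p8:
  fixes ofK :: "'k::{idom, ring_char_0} \<Rightarrow> 'a::ring_1"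
    and q :: 'k and g1 g2 g3 g2i :: 'a and \<tau> :: "'a \<Rightarrow> 'k" and r s :: nat
  assumes "\<exists>q'. q * q' = 1" and "\<exists>t. q = t * t" and "\<exists>t. (q + 1) * t = 1"
    and "central_hom ofK"
    and "TL3_rels ofK q g1 g2 g3"
    and "g2 * g2i = 1" and "g2i * g2 = 1"
    and "is_trace ofK \<tau>"
    and "1 \<le> r" and "r \<le> s"
  shows "let X = g2 * g1 * g3; u = g2 * g3 * g2i; B = subalg ofK {g1, u} in
    \<exists>h c Ms. h \<le> s \<and> (\<forall>j\<le>h. c j \<in> B) \<and> (\<forall>M\<in>set Ms. markov B g2 M) \<and>
      \<tau> (g3 * u * (g1 * u) ^ s * g3 * (g1 * u) ^ r)
        = \<tau> ((\<Sum>j = 0..h. c j * X ^ j) + sum_list Ms)"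
proof -
  obtain q' where "q * q' = 1" using assms(1) by blast
  then interpret TL3 ofK q q' g1 g2 g3 g2i
    using assms(4-7) by unfold_locales (simp_all add: central_algebra_def)
  obtain c Ms where "\<forall>j\<le>s. c j \<in> B" "\<forall>M\<in>set Ms. markov B g2 M"
    and "g3 * u * T ^ s * g3 * T ^ r = (\<Sum>j = 0..s. c j * X ^ j) + sum_list Ms"
    using reducible_word[of s r] unfolding reducible_def by blast
  then show ?thesis
    unfolding Let_def u_def T_def X_def by auto
qed

end
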